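(* Let $n\ge3$, $\mu\ge0$ and $\alpha\ge1$, and let $V(r,\varphi)$ be the Maxwell-ring potential in polar coordinates described in the context. Then $V_r(1,\pi/n)<0$.
   Context: Let $\zeta=2\pi/n$, $\phi_\alpha'(r)=-r^{-\alpha}$, $s=2^{-\alpha}\sum_{j=1}^{n-1}\sin^{-(\alpha-1)}(j\zeta/2)$. In polar coordinates $u=re^{i\varphi}$, the planar potential of a satellite attracted by $n$ unit masses at $e^{ij\zeta}$ and a central mass $\mu$ at $0$ (rescaled) is $$V(r,\varphi)=\frac{r^2}{2}+\frac{\mu}{s+\mu}\phi_\alpha(r)+\sum_{j=1}^n\frac1{s+\mu}\phi_\alpha\big(\|r-e^{i(j\zeta-\varphi)}\|\big),$$ so that $V_r(r,\varphi)=r-\frac{\mu}{s+\mu}r^{-\alpha}-\frac1{s+\mu}\sum_{j=1}^n\frac{r-\cos(j\zeta-\varphi)}{\|r-e^{i(j\zeta-\varphi)}\|^{\alpha+1}}$. *)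

theory Defs
  imports "HOL-Analysis.Analysis"
begin

text \<open>Potential phi_alpha with phi_alpha'(r) = - r^(-alpha) (additive constant fixed;
  it does not affect the radial derivative).\<close>
definition phi_alpha :: "real \<Rightarrow> real \<Rightarrow> real" where
  "phi_alpha \<alpha> r = (if \<alpha> = 1 then - ln r else r powr (1 - \<alpha>) / (\<alpha> - 1))"

definition zeta :: "nat \<Rightarrow> real" where
  "zeta n = 2 * pi / real n"

definition s_const :: "nat \<Rightarrow> real \<Rightarrow> real" where
  "s_const n \<alpha> = 2 powr (- \<alpha>) *
     (\<Sum>j=1..n-1. (sin (real j * zeta n / 2)) powr (- (\<alpha> - 1)))"

definition Vpot :: "nat \<Rightarrow> real \<Rightarrow> real \<Rightarrow> real \<Rightarrow> real \<Rightarrow> real" where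
  "Vpot n \<alpha> \<mu> r \<phi> = r^2 / 2 + \<mu> / (s_const n \<alpha> + \<mu>) * phi_alpha \<alpha> r
     + (\<Sum>j=1..n. 1 / (s_const n \<alpha> + \<mu>) *
          phi_alpha \<alpha> (norm (complex_of_real r - cis (real j * zeta n - \<phi>))))"

end

theory Submission
  imports Defs
begin

text \<open>At \<open>r = 1\<close>, \<open>\<phi> = \<pi>/n\<close> the satellite lies on the ring halfway between two primaries;
  the j-th primary is seen under the angle \<open>2 m\<^sub>j\<close> with \<open>m\<^sub>j = (2j - 1)\<pi>/(2n)\<close>, at distance
  \<open>2 sin m\<^sub>j\<close>, and contributes \<open>2\<^sup>-\<^sup>\<alpha> sin\<^sup>1\<^sup>-\<^sup>\<alpha> m\<^sub>j\<close> to the radial force. Hence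
  \<open>(s + \<mu>) V\<^sub>r(1, \<pi>/n) = s - 2\<^sup>-\<^sup>\<alpha> \<Sum>\<^sub>j sin\<^sup>1\<^sup>-\<^sup>\<alpha> m\<^sub>j\<close>, while \<open>s = 2\<^sup>-\<^sup>\<alpha> \<Sum>\<^sub>j sin\<^sup>1\<^sup>-\<^sup>\<alpha> (j\<pi>/n)\<close> is the same
  sum over the midpoints \<open>j\<pi>/n\<close> of consecutive \<open>m\<^sub>j\<close>. As \<open>sin (x - h) sin (x + h) \<le> sin\<^sup>2 x\<close>,
  AM-GM shows that \<open>sin\<^sup>-\<^sup>\<beta>\<close> at a midpoint is at most the mean of its two neighbours;
  summing, the \<open>n - 1\<close> midpoint values fall short of the \<open>n\<close> values at the \<open>m\<^sub>j\<close> by half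
  the two positive boundary terms.\<close>

lemma has_real_derivative_phi_alpha:
  assumes "r > 0"
  shows "(phi_alpha \<alpha> has_real_derivative - (r powr - \<alpha>)) (at r)"
proof (cases "\<alpha> = 1")
  case True
  have "((\<lambda>r. - ln r) has_real_derivative - inverse r) (at r)"
    by (intro DERIV_minus DERIV_ln assms)
  with True assms show ?thesis
    by (simp add: phi_alpha_def [abs_def] powr_minus)
next
  case False
  have "((\<lambda>r. r powr (1 - \<alpha>) / (\<alpha> - 1)) has_real_derivative
          (1 - \<alpha>) * r powr (1 - \<alpha> - 1) / (\<alpha> - 1)) (at r)"
    by (intro DERIV_cdivide has_real_derivative_powr assms)
  moreover have "(1 - \<alpha>) * r powr (1 - \<alpha> - 1) / (\<alpha> - 1) = - (r powr - \<alpha>)"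
    using False by (simp add: field_simps)
  ultimately show ?thesis
    using False by (simp add: phi_alpha_def [abs_def])
qed

lemma has_real_derivative_phi_alpha_dist_cis:
  fixes r t :: real
  defines "d \<equiv> norm (complex_of_real r - cis t)"
  assumes "d \<noteq> 0"
  shows "((\<lambda>x. phi_alpha \<alpha> (norm (complex_of_real x - cis t))) has_real_derivative
           - (r - cos t) / d powr (\<alpha> + 1)) (at r)"
proof -
  have norm_eq: "norm (complex_of_real x - cis t) = sqrt ((x - cos t)\<^sup>2 + (sin t)\<^sup>2)" for x
    by (simp add: cmod_def)
  have d_pos: "d > 0"
    using assms by simp
  have d_eq: "sqrt ((r - cos t)\<^sup>2 + (sin t)\<^sup>2) = d"
    by (simp add: d_def norm_eq)
  have "((\<lambda>x. sqrt ((x - cos t)\<^sup>2 + (sin t)\<^sup>2)) has_real_derivative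
          inverse d / 2 * (2 * (r - cos t))) (at r)"
    using d_pos d_eq by (auto intro!: derivative_eq_intros)
  from DERIV_chain2 [OF has_real_derivative_phi_alpha [OF d_pos, folded d_eq] this]
  have "((\<lambda>x. phi_alpha \<alpha> (norm (complex_of_real x - cis t))) has_real_derivative
          - (d powr - \<alpha>) * (inverse d / 2 * (2 * (r - cos t)))) (at r)"
    unfolding norm_eq d_eq .
  moreover have "- (d powr - \<alpha>) * (inverse d / 2 * (2 * (r - cos t))) = - (r - cos t) / d powr (\<alpha> + 1)"
    using d_pos by (simp add: powr_add powr_minus field_simps)
  ultimately show ?thesis
    by simp
qed

lemma Vpot_has_radial_derivative:
  fixes n :: nat and \<alpha> \<mu> r \<phi> :: real
  defines "s \<equiv> s_const n \<alpha>" and "\<theta> \<equiv> \<lambda>j. real j * zeta n - \<phi>"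
  assumes "r > 0" and "\<And>j. j \<in> {1..n} \<Longrightarrow> complex_of_real r \<noteq> cis (\<theta> j)"
  shows "((\<lambda>x. Vpot n \<alpha> \<mu> x \<phi>) has_real_derivative
      r - \<mu> / (s + \<mu>) * r powr - \<alpha>
        - (\<Sum>j=1..n. (r - cos (\<theta> j)) / norm (complex_of_real r - cis (\<theta> j)) powr (\<alpha> + 1))
            / (s + \<mu>)) (at r)"
proof -
  have "((\<lambda>x. x\<^sup>2 / 2 + \<mu> / (s + \<mu>) * phi_alpha \<alpha> x
            + (\<Sum>j=1..n. 1 / (s + \<mu>) * phi_alpha \<alpha> (norm (complex_of_real x - cis (\<theta> j)))))
        has_real_derivative
          r + \<mu> / (s + \<mu>) * - (r powr - \<alpha>)
            + (\<Sum>j=1..n. 1 / (s + \<mu>) *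
                 (- (r - cos (\<theta> j)) / norm (complex_of_real r - cis (\<theta> j)) powr (\<alpha> + 1))))
          (at r)"
    using assms(3,4)
    by (intro DERIV_add DERIV_cmult DERIV_sum has_real_derivative_phi_alpha
        has_real_derivative_phi_alpha_dist_cis) (auto intro!: derivative_eq_intros)
  moreover have "(\<lambda>x. Vpot n \<alpha> \<mu> x \<phi>) = (\<lambda>x. x\<^sup>2 / 2 + \<mu> / (s + \<mu>) * phi_alpha \<alpha> x
            + (\<Sum>j=1..n. 1 / (s + \<mu>) * phi_alpha \<alpha> (norm (complex_of_real x - cis (\<theta> j)))))"
    by (simp add: Vpot_def [abs_def] s_def \<theta>_def)
  moreover have "(\<Sum>j=1..n. 1 / (s + \<mu>) *
                 (- (r - cos (\<theta> j)) / norm (complex_of_real r - cis (\<theta> j)) powr (\<alpha> + 1)))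
      = - (\<Sum>j=1..n. (r - cos (\<theta> j)) / norm (complex_of_real r - cis (\<theta> j)) powr (\<alpha> + 1))
            / (s + \<mu>)"
    unfolding sum_divide_distrib sum_negf [symmetric] by (intro sum.cong) (auto simp: minus_divide_left mult.commute)
  ultimately show ?thesis
    by (simp add: algebra_simps)
qed

lemma norm_one_minus_cis_double:
  assumes "sin m \<ge> 0"
  shows "norm (1 - cis (2 * m)) = 2 * sin m"
proof -
  have "(norm (1 - cis (2 * m)))\<^sup>2 = (1 - cos (2 * m))\<^sup>2 + (sin (2 * m))\<^sup>2"
    by (simp add: cmod_power2)
  also have "\<dots> = 2 - 2 * cos (2 * m)"
    by (simp add: power2_eq_square algebra_simps flip: sin_squared_eq)
  also have "\<dots> = (2 * sin m)\<^sup>2"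
    by (simp add: cos_double_sin power2_eq_square)
  finally show ?thesis
    using assms by (subst (asm) power2_eq_iff_nonneg) auto
qed

lemma radial_term_one_cis_double:
  assumes "sin m > 0"
  shows "(1 - cos (2 * m)) / norm (1 - cis (2 * m)) powr (\<alpha> + 1) = 2 powr - \<alpha> * sin m powr (1 - \<alpha>)"
proof -
  have "(1 - cos (2 * m)) / norm (1 - cis (2 * m)) powr (\<alpha> + 1) = 2 * (sin m)\<^sup>2 / (2 * sin m) powr (\<alpha> + 1)"
    using assms by (simp add: norm_one_minus_cis_double cos_double_sin)
  also have "\<dots> = 2 powr - \<alpha> * sin m powr (1 - \<alpha>)"
    using assms by (simp add: powr_mult powr_add powr_diff powr_minus power2_eq_square field_simps)
  finally show ?thesis .
qed

lemma sin_diff_mult_sin_add: "sin (x - h) * sin (x + h) = (sin x)\<^sup>2 - (sin h)\<^sup>2"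
  for x h :: real
proof -
  have "sin (x - h) * sin (x + h) = (sin x * cos h)\<^sup>2 - (cos x * sin h)\<^sup>2"
    by (simp only: sin_add sin_diff power2_eq_square) (simp add: algebra_simps)
  also have "\<dots> = (sin x)\<^sup>2 - (sin h)\<^sup>2"
    by (simp add: cos_squared_eq power_mult_distrib algebra_simps)
  finally show ?thesis .
qed

lemma sin_powr_midpoint_convex:
  fixes x h \<beta> :: real
  assumes "0 < x - h" "x + h < pi" "h \<ge> 0" "\<beta> \<ge> 0"
  shows "sin x powr - \<beta> \<le> (sin (x - h) powr - \<beta> + sin (x + h) powr - \<beta>) / 2"
proof -
  define a b where "a = sin (x - h)" and "b = sin (x + h)"
  have "a > 0" "b > 0" "sin x > 0"
    using assms unfolding a_def b_def by (auto intro!: sin_gt_zero)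
  have "a * b \<le> sin x * sin x"
    unfolding a_def b_def sin_diff_mult_sin_add by (simp add: power2_eq_square)
  then have "(sin x * sin x) powr (- \<beta> / 2) \<le> (a * b) powr (- \<beta> / 2)"
    using \<open>a > 0\<close> \<open>b > 0\<close> assms(4) by (intro powr_mono2') auto
  also have "\<dots> = a powr (- \<beta> / 2) * b powr (- \<beta> / 2)"
    using \<open>a > 0\<close> \<open>b > 0\<close> by (simp add: powr_mult)
  also have "\<dots> \<le> ((a powr (- \<beta> / 2))\<^sup>2 + (b powr (- \<beta> / 2))\<^sup>2) / 2"
    using sum_squares_bound [of "a powr (- \<beta> / 2)" "b powr (- \<beta> / 2)"] by simp
  finally have "(sin x * sin x) powr (- \<beta> / 2) \<le> ((a powr (- \<beta> / 2))\<^sup>2 + (b powr (- \<beta> / 2))\<^sup>2) / 2" .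
  moreover have half_powr: "(y powr (- \<beta> / 2))\<^sup>2 = y powr - \<beta>" if "y > 0" for y :: real
    by (simp add: power2_eq_square flip: powr_add)
  moreover have "(sin x * sin x) powr (- \<beta> / 2) = sin x powr - \<beta>"
    using \<open>sin x > 0\<close> half_powr by (simp add: powr_mult power2_eq_square)
  ultimately show ?thesis
    using \<open>a > 0\<close> \<open>b > 0\<close> unfolding a_def b_def by simp
qed

lemma sum_mean_consecutive:
  fixes g :: "nat \<Rightarrow> real"
  assumes "n \<ge> 1"
  shows "(\<Sum>j=1..n-1. (g j + g (j + 1)) / 2) = (\<Sum>j=1..n. g j) - (g 1 + g n) / 2"
  using assms
proof (induction n rule: dec_induct)
  case (step m)
  then have "{1..Suc m - 1} = insert m {1..m - 1}"
    by auto
  with step show ?case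
    by (simp add: field_simps)
qed simp

lemma half_shifted_grid_bounds:
  assumes "j \<in> {1..n}"
  shows "0 < (2 * real j - 1) * pi / (2 * real n)" and "(2 * real j - 1) * pi / (2 * real n) < pi"
proof -
  have "0 < 2 * real j - 1" "2 * real j - 1 < 2 * real n"
    using assms by auto
  then have "0 < (2 * real j - 1) * pi" "(2 * real j - 1) * pi < (2 * real n) * pi"
    by (simp_all add: mult_strict_right_mono)
  then show "0 < (2 * real j - 1) * pi / (2 * real n)" "(2 * real j - 1) * pi / (2 * real n) < pi"
    using assms by (simp_all add: field_simps)
qed

lemma sin_half_shifted_grid_pos:
  assumes "j \<in> {1..n}"
  shows "sin ((2 * real j - 1) * pi / (2 * real n)) > 0"
  using half_shifted_grid_bounds [OF assms] by (rule sin_gt_zero)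

lemma sum_sin_powr_less_half_shifted:
  fixes \<beta> :: real
  assumes "n \<ge> 1" "\<beta> \<ge> 0"
  shows "(\<Sum>j=1..n-1. sin (real j * pi / real n) powr - \<beta>)
           < (\<Sum>j=1..n. sin ((2 * real j - 1) * pi / (2 * real n)) powr - \<beta>)"
proof -
  define m where "m j = (2 * real j - 1) * pi / (2 * real n)" for j :: nat
  define g where "g j = sin (m j) powr - \<beta>" for j
  have m_bounds: "0 < m j" "m j < pi" if "j \<in> {1..n}" for j
    using half_shifted_grid_bounds [OF that] by (simp_all add: m_def)
  have g_pos: "g j > 0" if "j \<in> {1..n}" for j
    using sin_half_shifted_grid_pos [OF that] by (simp add: g_def m_def)
  have "(\<Sum>j=1..n-1. sin (real j * pi / real n) powr - \<beta>) \<le> (\<Sum>j=1..n-1. (g j + g (j + 1)) / 2)"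
  proof (rule sum_mono)
    fix j assume j: "j \<in> {1..n-1}"
    have "real j * pi / real n - pi / (2 * real n) = m j"
      and "real j * pi / real n + pi / (2 * real n) = m (j + 1)"
      using assms(1) by (simp_all add: m_def field_simps)
    moreover have "0 < m j" "m (j + 1) < pi"
      using m_bounds [of j] m_bounds [of "j + 1"] j by auto
    ultimately show "sin (real j * pi / real n) powr - \<beta> \<le> (g j + g (j + 1)) / 2"
      using sin_powr_midpoint_convex [of "real j * pi / real n" "pi / (2 * real n)" \<beta>] assms
      by (simp add: g_def)
  qed
  also have "\<dots> = (\<Sum>j=1..n. g j) - (g 1 + g n) / 2"
    using assms(1) by (rule sum_mean_consecutive)
  also have "\<dots> < (\<Sum>j=1..n. g j)"
    using g_pos [of 1] g_pos [of n] assms(1) by simp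
  finally show ?thesis
    by (simp add: g_def m_def)
qed

lemma s_const_eq: "s_const n \<alpha> = 2 powr - \<alpha> * (\<Sum>j=1..n-1. sin (real j * pi / real n) powr (1 - \<alpha>))"
  by (simp add: s_const_def zeta_def)

lemma s_const_pos:
  assumes "n \<ge> 2"
  shows "s_const n \<alpha> > 0"
proof -
  have "sin (real j * pi / real n) powr (1 - \<alpha>) > 0" if "j \<in> {1..n-1}" for j
  proof -
    have "real j * pi < real n * pi"
      using that assms by auto
    then have "sin (real j * pi / real n) > 0"
      using that assms by (intro sin_gt_zero) (auto simp: field_simps)
    then show ?thesis
      by simp
  qed
  then have "(\<Sum>j=1..n-1. sin (real j * pi / real n) powr (1 - \<alpha>)) > 0"
    using assms by (intro sum_pos) auto
  then show ?thesis
    by (simp add: s_const_eq)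
qed

lemma Vpot_radial_derivative_between_primaries:
  fixes n :: nat and \<alpha> \<mu> :: real
  assumes "n \<ge> 1" and "s_const n \<alpha> + \<mu> \<noteq> 0"
  shows "((\<lambda>r. Vpot n \<alpha> \<mu> r (pi / real n)) has_real_derivative
      (s_const n \<alpha> - 2 powr - \<alpha> * (\<Sum>j=1..n. sin ((2 * real j - 1) * pi / (2 * real n)) powr (1 - \<alpha>)))
        / (s_const n \<alpha> + \<mu>)) (at 1)"
proof -
  define s where "s = s_const n \<alpha>"
  define m where "m j = (2 * real j - 1) * pi / (2 * real n)" for j :: nat
  have angle: "real j * zeta n - pi / real n = 2 * m j" for j
    using assms(1) by (simp add: zeta_def m_def field_simps)
  have sin_m: "sin (m j) > 0" if "j \<in> {1..n}" for j
    using that sin_half_shifted_grid_pos by (simp add: m_def)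
  have "1 \<noteq> cis (2 * m j)" if "j \<in> {1..n}" for j
    using norm_one_minus_cis_double [of "m j"] sin_m [OF that] by force
  from Vpot_has_radial_derivative [where r = 1 and \<phi> = "pi / real n" and n = n, unfolded angle] this
  have "((\<lambda>r. Vpot n \<alpha> \<mu> r (pi / real n)) has_real_derivative
      1 - \<mu> / (s + \<mu>) - (\<Sum>j=1..n. (1 - cos (2 * m j)) / norm (1 - cis (2 * m j)) powr (\<alpha> + 1))
        / (s + \<mu>)) (at 1)"
    by (simp add: s_def)
  moreover have "(\<Sum>j=1..n. (1 - cos (2 * m j)) / norm (1 - cis (2 * m j)) powr (\<alpha> + 1))
      = 2 powr - \<alpha> * (\<Sum>j=1..n. sin (m j) powr (1 - \<alpha>))"
    unfolding sum_distrib_left using sin_m by (intro sum.cong) (simp_all add: radial_term_one_cis_double)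
  moreover have "1 - \<mu> / (s + \<mu>) - x / (s + \<mu>) = (s - x) / (s + \<mu>)" for x
  proof -
    have "1 - \<mu> / (s + \<mu>) = s / (s + \<mu>)"
      using assms(2) by (simp add: s_def field_simps)
    then show ?thesis
      by (simp add: diff_divide_distrib)
  qed
  ultimately show ?thesis
    by (simp add: s_def m_def)
qed

theorem mainTheorem8:
  fixes n :: nat and \<mu> \<alpha> :: real
  assumes "n \<ge> 3" and "\<mu> \<ge> 0" and "\<alpha> \<ge> 1"
  shows "\<exists>D. ((\<lambda>r. Vpot n \<alpha> \<mu> r (pi / real n)) has_real_derivative D) (at 1) \<and> D < 0"
proof -
  let ?s = "s_const n \<alpha>"
  let ?S = "\<Sum>j=1..n. sin ((2 * real j - 1) * pi / (2 * real n)) powr (1 - \<alpha>)"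
  have "?s > 0"
    using assms(1) by (intro s_const_pos) simp
  with assms(2) have denom_pos: "?s + \<mu> > 0"
    by simp
  have "(\<Sum>j=1..n-1. sin (real j * pi / real n) powr (1 - \<alpha>)) < ?S"
    using sum_sin_powr_less_half_shifted [of n "\<alpha> - 1"] assms(1,3) by simp
  then have "(?s - 2 powr - \<alpha> * ?S) / (?s + \<mu>) < 0"
    using denom_pos by (simp add: s_const_eq divide_neg_pos)
  moreover have "((\<lambda>r. Vpot n \<alpha> \<mu> r (pi / real n)) has_real_derivative
      (?s - 2 powr - \<alpha> * ?S) / (?s + \<mu>)) (at 1)"
    using assms(1) denom_pos by (intro Vpot_radial_derivative_between_primaries) auto
  ultimately show ?thesis
    by blast
qed

end
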